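(* Let $M\in\{0,1\}^{m\times n}$. Then $\operatorname{disc}^{-}(M)\geq \operatorname{disc}^{+}(M)/3$ and $\operatorname{disc}^{+}(M)\geq \operatorname{disc}^{-}(M)/3$; in particular $\operatorname{disc}^+(M)=\Theta(\operatorname{disc}^-(M))$.
   Context: For $M\in\{0,1\}^{m\times n}$, $|M|$ is the number of $1$ entries, $p=|M|/(mn)$, and for $X\subset[m]$, $Y\subset[n]$, $\operatorname{disc}(X,Y)=|M[X\times Y]|-p|X||Y|$, where $|M[X\times Y]|$ is the number of $1$ entries of the submatrix with rows $X$ and columns $Y$. The positive discrepancy is $\operatorname{disc}^{+}(M)=\max_{X\subset[m],Y\subset[n]}\operatorname{disc}(X,Y)$ and the negative discrepancy is $\operatorname{disc}^{-}(M)=\max_{X\subset[m],Y\subset[n]}(-\operatorname{disc}(X,Y))$. *)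

theory Defs
  imports Main Complex_Main
begin

text \<open>A 0/1 matrix with m rows and n columns is represented by
  M :: nat \<Rightarrow> nat \<Rightarrow> bool on rows {..<m} and columns {..<n};
  M i j = True means the (i,j) entry is 1. Values outside the range are irrelevant.\<close>

definition ones :: "(nat \<Rightarrow> nat \<Rightarrow> bool) \<Rightarrow> nat set \<Rightarrow> nat set \<Rightarrow> nat" where
  "ones M X Y = card {(i, j). i \<in> X \<and> j \<in> Y \<and> M i j}"

definition density :: "nat \<Rightarrow> nat \<Rightarrow> (nat \<Rightarrow> nat \<Rightarrow> bool) \<Rightarrow> real" where
  "density m n M = real (ones M {..<m} {..<n}) / (real m * real n)"

definition disc :: "nat \<Rightarrow> nat \<Rightarrow> (nat \<Rightarrow> nat \<Rightarrow> bool) \<Rightarrow> nat set \<Rightarrow> nat set \<Rightarrow> real" where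
  "disc m n M X Y = real (ones M X Y) - density m n M * real (card X) * real (card Y)"

definition disc_pos :: "nat \<Rightarrow> nat \<Rightarrow> (nat \<Rightarrow> nat \<Rightarrow> bool) \<Rightarrow> real" where
  "disc_pos m n M = Max {disc m n M X Y | X Y. X \<subseteq> {..<m} \<and> Y \<subseteq> {..<n}}"

definition disc_neg :: "nat \<Rightarrow> nat \<Rightarrow> (nat \<Rightarrow> nat \<Rightarrow> bool) \<Rightarrow> real" where
  "disc_neg m n M = Max {- disc m n M X Y | X Y. X \<subseteq> {..<m} \<and> Y \<subseteq> {..<n}}"

end

theory Submission
  imports Defs
begin

text \<open>The rectangles \<open>X \<times> Y\<close>, \<open>X \<times> Y\<^sup>c\<close>, \<open>X\<^sup>c \<times> Y\<close>, \<open>X\<^sup>c \<times> Y\<^sup>c\<close> partition the matrix,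
  whose total discrepancy is \<open>0\<close> by the choice of \<open>p\<close>, and the discrepancy is additive
  over such partitions. Hence if \<open>X \<times> Y\<close> has discrepancy \<open>D\<close>, the other three rectangles
  have discrepancies summing to \<open>-D\<close>, so one of them is at most \<open>-D/3\<close>; symmetrically
  for negative discrepancy.\<close>

lemma ones_eq_sum:
  assumes "finite X" "finite Y"
  shows "real (ones M X Y) = (\<Sum>i\<in>X. \<Sum>j\<in>Y. if M i j then 1 else 0)"
proof -
  have "{(i, j). i \<in> X \<and> j \<in> Y \<and> M i j} = Sigma X (\<lambda>i. {j\<in>Y. M i j})"
    by auto
  then have "ones M X Y = (\<Sum>i\<in>X. card {j\<in>Y. M i j})"
    unfolding ones_def using assms by (simp add: card_SigmaI)
  then show ?thesis
    using assms by (simp add: sum.If_cases Int_def)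
qed

lemma disc_eq_sum:
  assumes "finite X" "finite Y"
  shows "disc m n M X Y = (\<Sum>i\<in>X. \<Sum>j\<in>Y. (if M i j then 1 else 0) - density m n M)"
  using ones_eq_sum[OF assms, of M] unfolding disc_def by (simp add: sum_subtractf)

lemma disc_Un_left:
  assumes "finite X\<^sub>1" "finite X\<^sub>2" "finite Y" "X\<^sub>1 \<inter> X\<^sub>2 = {}"
  shows "disc m n M (X\<^sub>1 \<union> X\<^sub>2) Y = disc m n M X\<^sub>1 Y + disc m n M X\<^sub>2 Y"
  using assms by (simp add: disc_eq_sum sum.union_disjoint)

lemma disc_Un_right:
  assumes "finite X" "finite Y\<^sub>1" "finite Y\<^sub>2" "Y\<^sub>1 \<inter> Y\<^sub>2 = {}"
  shows "disc m n M X (Y\<^sub>1 \<union> Y\<^sub>2) = disc m n M X Y\<^sub>1 + disc m n M X Y\<^sub>2"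
  using assms by (simp add: disc_eq_sum sum.union_disjoint sum.distrib)

lemma disc_full: "disc m n M {..<m} {..<n} = 0"
proof (cases "m = 0 \<or> n = 0")
  case True
  then show ?thesis by (auto simp: disc_eq_sum)
next
  case False
  then show ?thesis by (simp add: disc_def density_def)
qed

lemma disc_quadrants_sum_eq_0:
  assumes "X \<subseteq> {..<m}" "Y \<subseteq> {..<n}"
  shows "disc m n M X Y + disc m n M X ({..<n} - Y) + disc m n M ({..<m} - X) Y
           + disc m n M ({..<m} - X) ({..<n} - Y) = 0"
proof -
  have fin: "finite X" "finite Y" "finite ({..<m} - X)" "finite ({..<n} - Y)"
    using assms finite_subset by auto
  have "disc m n M {..<m} {..<n} = disc m n M (X \<union> ({..<m} - X)) (Y \<union> ({..<n} - Y))"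
    using assms by (simp add: Un_absorb1)
  also have "\<dots> = disc m n M X Y + disc m n M X ({..<n} - Y)
               + (disc m n M ({..<m} - X) Y + disc m n M ({..<m} - X) ({..<n} - Y))"
    using fin by (simp only: disc_Un_left disc_Un_right Diff_disjoint finite_Un)
  finally show ?thesis
    using disc_full[of m n M] by simp
qed

lemma rectangle_values_finite:
  "finite {f X Y | X Y. X \<subseteq> {..<m::nat} \<and> Y \<subseteq> {..<n::nat}}"
proof -
  have "{f X Y | X Y. X \<subseteq> {..<m} \<and> Y \<subseteq> {..<n}} = case_prod f ` (Pow {..<m} \<times> Pow {..<n})"
    by auto
  then show ?thesis by simp
qed

lemma rectangle_values_nonempty:
  "{f X Y | X Y. X \<subseteq> {..<m::nat} \<and> Y \<subseteq> {..<n::nat}} \<noteq> {}"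
  by blast

lemma disc_le_disc_pos:
  "X \<subseteq> {..<m} \<Longrightarrow> Y \<subseteq> {..<n} \<Longrightarrow> disc m n M X Y \<le> disc_pos m n M"
  unfolding disc_pos_def by (rule Max_ge[OF rectangle_values_finite]) blast

lemma neg_disc_le_disc_neg:
  "X \<subseteq> {..<m} \<Longrightarrow> Y \<subseteq> {..<n} \<Longrightarrow> - disc m n M X Y \<le> disc_neg m n M"
  unfolding disc_neg_def by (rule Max_ge[OF rectangle_values_finite]) blast

lemma disc_pos_attained:
  obtains X Y where "X \<subseteq> {..<m}" "Y \<subseteq> {..<n}" "disc_pos m n M = disc m n M X Y"
proof -
  have "disc_pos m n M \<in> {disc m n M X Y | X Y. X \<subseteq> {..<m} \<and> Y \<subseteq> {..<n}}"
    unfolding disc_pos_def by (rule Max_in[OF rectangle_values_finite rectangle_values_nonempty])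
  then show ?thesis using that by blast
qed

lemma disc_neg_attained:
  obtains X Y where "X \<subseteq> {..<m}" "Y \<subseteq> {..<n}" "disc_neg m n M = - disc m n M X Y"
proof -
  have "disc_neg m n M \<in> {- disc m n M X Y | X Y. X \<subseteq> {..<m} \<and> Y \<subseteq> {..<n}}"
    unfolding disc_neg_def by (rule Max_in[OF rectangle_values_finite rectangle_values_nonempty])
  then show ?thesis using that by blast
qed

lemma disc_pos_le_3_disc_neg: "disc_pos m n M \<le> 3 * disc_neg m n M"
proof -
  obtain X Y where XY: "X \<subseteq> {..<m}" "Y \<subseteq> {..<n}" and pos: "disc_pos m n M = disc m n M X Y"
    by (rule disc_pos_attained)
  have co: "{..<m} - X \<subseteq> {..<m}" "{..<n} - Y \<subseteq> {..<n}"
    by auto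
  show ?thesis
    using pos disc_quadrants_sum_eq_0[OF XY, of M] neg_disc_le_disc_neg[OF XY(1) co(2), of M]
      neg_disc_le_disc_neg[OF co(1) XY(2), of M] neg_disc_le_disc_neg[OF co, of M]
    by linarith
qed

lemma disc_neg_le_3_disc_pos: "disc_neg m n M \<le> 3 * disc_pos m n M"
proof -
  obtain X Y where XY: "X \<subseteq> {..<m}" "Y \<subseteq> {..<n}" and neg: "disc_neg m n M = - disc m n M X Y"
    by (rule disc_neg_attained)
  have co: "{..<m} - X \<subseteq> {..<m}" "{..<n} - Y \<subseteq> {..<n}"
    by auto
  show ?thesis
    using neg disc_quadrants_sum_eq_0[OF XY, of M] disc_le_disc_pos[OF XY(1) co(2), of M]
      disc_le_disc_pos[OF co(1) XY(2), of M] disc_le_disc_pos[OF co, of M]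
    by linarith
qed

theorem claim2p1:
  fixes m n :: nat and M :: "nat \<Rightarrow> nat \<Rightarrow> bool"
  shows "disc_neg m n M \<ge> disc_pos m n M / 3 \<and> disc_pos m n M \<ge> disc_neg m n M / 3"
  using disc_pos_le_3_disc_neg[of m n M] disc_neg_le_3_disc_pos[of m n M] by simp

end
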